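(* Let $\delta\ge3$ and let $K^{(\delta)}$ be a $\delta$-PHO with potential coefficients $v_h=v^{(\delta)}_h$. Put $V(q)=\tfrac12(q_1^2+q_2^2)+V^{(\delta)}(q)$. There exist real constants $(\alpha,\beta,\beta',\gamma,\gamma')\ne(0,0,0,0,0)$ such that for all $q\in\mathbb R^2$ $$\Big(\tfrac{\partial^2V}{\partial q_2^2}-\tfrac{\partial^2V}{\partial q_1^2}\Big)(-2\alpha q_1q_2-\beta'q_2-\beta q_1+\gamma)+2\tfrac{\partial^2V}{\partial q_1\partial q_2}(\alpha q_2^2-\alpha q_1^2+\beta q_2-\beta'q_1+\gamma')+\tfrac{\partial V}{\partial q_1}(6\alpha q_2+3\beta)-\tfrac{\partial V}{\partial q_2}(6\alpha q_1+3\beta')=0$$ if and only if: (I) for odd $\delta\ge5$: $\operatorname{rank}\mathcal M(K^{(\delta)})=1$; (II) for even $\delta\ge4$: either $\operatorname{rank}\mathcal M(K^{(\delta)})=1$, or $v_0\ne0$, $v_{2h}=\binom{\delta/2}{h}\binom{\delta}{2h}^{-1}v_0$ for $h=1,\dots,\delta/2$, and $v_{2h'-1}=0$ for $h'=1,\dots,\delta/2$; (III) for $\delta=3$: either $\operatorname{rank}\mathcal M(K^{(3)})=1$, or $$\operatorname{rank}\begin{pmatrix}7v_1&-v_0+6v_2&-2v_1+5v_3\\-5v_0+2v_2&-6v_1+v_3&-7v_2\end{pmatrix}=1.$$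
   Context: A $\delta$-PHO is the Hamiltonian $K^{(\delta)}(q,p)=\tfrac12\sum_{j=1}^2(p_j^2+q_j^2)+V^{(\delta)}(q)$ on $\mathbb R^4$, with $V^{(\delta)}(q)=\sum_{h=0}^{\delta}v^{(\delta)}_h\binom{\delta}{h}q_1^hq_2^{\delta-h}$, real coefficients, $V^{(\delta)}\not\equiv0$. $\mathcal M(K^{(\delta)})$ is the $2\times(\delta-1)$ real matrix whose $(h+1)$-st column, $h=0,\dots,\delta-2$, is $\big(v^{(\delta)}_h-v^{(\delta)}_{h+2},\ 2v^{(\delta)}_{h+1}\big)^T$. The displayed identity is the Bertrand–Darboux condition; by the classical Bertrand–Darboux theorem it is equivalent to the existence of a first integral quadratic in the momenta (independent of the Hamiltonian). *)

theory Defs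
  imports "HOL-Analysis.Analysis"
begin

definition hom_pot :: "nat \<Rightarrow> (nat \<Rightarrow> real) \<Rightarrow> real \<Rightarrow> real \<Rightarrow> real" where
  "hom_pot d v q1 q2 = (\<Sum>h=0..d. v h * real (d choose h) * q1 ^ h * q2 ^ (d - h))"

definition full_pot :: "nat \<Rightarrow> (nat \<Rightarrow> real) \<Rightarrow> real \<Rightarrow> real \<Rightarrow> real" where
  "full_pot d v q1 q2 = (q1^2 + q2^2) / 2 + hom_pot d v q1 q2"

definition d1 :: "(real \<Rightarrow> real \<Rightarrow> real) \<Rightarrow> real \<Rightarrow> real \<Rightarrow> real" where
  "d1 f q1 q2 = deriv (\<lambda>x. f x q2) q1"
definition d2 :: "(real \<Rightarrow> real \<Rightarrow> real) \<Rightarrow> real \<Rightarrow> real \<Rightarrow> real" where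
  "d2 f q1 q2 = deriv (\<lambda>y. f q1 y) q2"

text \<open>Rank of a real 2 x n matrix given by its list of columns (column rank).\<close>
definition rank2 :: "(real \<times> real) list \<Rightarrow> nat" where
  "rank2 cols = dim (set cols)"

text \<open>The matrix M(K^(d)): column h+1 (h = 0..d-2) is (v_h - v_{h+2}, 2 v_{h+1}).\<close>
definition Mcols :: "nat \<Rightarrow> (nat \<Rightarrow> real) \<Rightarrow> (real \<times> real) list" where
  "Mcols d v = map (\<lambda>h. (v h - v (h+2), 2 * v (h+1))) [0..<d-1]"

definition M3cols :: "(nat \<Rightarrow> real) \<Rightarrow> (real \<times> real) list" where
  "M3cols v = [(7 * v 1, -5 * v 0 + 2 * v 2), (- v 0 + 6 * v 2, -6 * v 1 + v 3),
               (-2 * v 1 + 5 * v 3, -7 * v 2)]"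

end

theory Submission
  imports Defs
begin

text \<open>
  Write V = (q1^2 + q2^2)/2 + W with W homogeneous of degree d. The Bertrand-Darboux expression
  splits into homogeneous pieces: in degree d, -2(d+2) \<alpha> times the angular derivative
  q1 W_q2 - q2 W_q1 (by Euler's identity); in degree d - 1 a part linear in (\<beta>, \<beta>'); in degree
  d - 2 the part \<gamma> (W_q2q2 - W_q1q1) + 2 \<gamma>' W_q1q2; and 3 \<beta> q1 - 3 \<beta>' q2 coming from the
  quadratic term. Scaling q separates the degrees. The angular derivative of W vanishes iff W is
  rotation invariant, i.e. a multiple of (q1^2 + q2^2)^(d/2): this needs d even and gives the
  binomial coefficients of (II). The \<gamma>-part vanishes iff (\<gamma>, \<gamma>') is orthogonal to every column
  of M(K), which for nonzero M means rank M(K) = 1. For d \<ge> 4 the linear term forces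
  \<beta> = \<beta>' = 0. For d = 3 it has the same degree as the \<gamma>-part: then the \<beta>-part vanishes iff
  (\<beta>, \<beta>') is orthogonal to the columns of the matrix in (III), and the remaining linear system
  for (\<gamma>, \<gamma>') can be solved unless the 2 x 2 matrix M(K) is singular, i.e. of rank one.
\<close>

section \<open>Rank of a matrix with two rows\<close>

definition left_null :: "real \<times> real \<Rightarrow> (real \<times> real) list \<Rightarrow> bool" where
  "left_null u cols \<longleftrightarrow> (\<forall>p\<in>set cols. fst u * fst p + snd u * snd p = 0)"

lemma left_null_imp_subset_span:
  assumes "left_null (u1, u2) cols" and "(u1, u2) \<noteq> 0"
  shows "set cols \<subseteq> span {(- u2, u1)}"
proof
  fix q assume "q \<in> set cols"
  obtain a b where q: "q = (a, b)"
    by (cases q)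
  with \<open>q \<in> set cols\<close> have ab: "u1 * a + u2 * b = 0"
    using assms(1) unfolding left_null_def by force
  have "q = (if u1 = 0 then - a / u2 else b / u1) *\<^sub>R (- u2, u1)"
  proof (cases "u1 = 0")
    case True
    then show ?thesis
      using assms(2) ab q by (simp add: zero_prod_def)
  next
    case False
    then show ?thesis
      using ab q by (simp add: field_simps)
  qed
  then show "q \<in> span {(- u2, u1)}"
    by (metis span_base span_scale singletonI)
qed

lemma rank2_eq_1_iff: "rank2 cols = 1 \<longleftrightarrow> (\<exists>u. u \<noteq> 0 \<and> left_null u cols) \<and> (\<exists>p\<in>set cols. p \<noteq> 0)"
proof
  assume rank: "rank2 cols = 1"
  then have nonzero: "\<exists>p\<in>set cols. p \<noteq> 0"
    unfolding rank2_def by (metis dim_eq_0 one_neq_zero singletonI subsetI)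
  have "dim (set cols) < DIM(real \<times> real)"
    using rank by (simp add: rank2_def)
  then obtain u :: "real \<times> real" where "u \<noteq> 0"
    and u: "\<And>p. p \<in> span (set cols) \<Longrightarrow> orthogonal u p"
    using orthogonal_to_subspace_exists by blast
  moreover have "left_null u cols"
    unfolding left_null_def using u span_base by (fastforce simp: orthogonal_def inner_prod_def)
  ultimately show "(\<exists>u. u \<noteq> 0 \<and> left_null u cols) \<and> (\<exists>p\<in>set cols. p \<noteq> 0)"
    using nonzero by blast
next
  assume "(\<exists>u. u \<noteq> 0 \<and> left_null u cols) \<and> (\<exists>p\<in>set cols. p \<noteq> 0)"
  then obtain u1 u2 p where "(u1, u2) \<noteq> 0" "left_null (u1, u2) cols" "p \<in> set cols" "p \<noteq> 0"
    by auto
  then have "dim (set cols) \<le> dim {(- u2, u1)}"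
    using left_null_imp_subset_span dim_subset by (metis dim_span)
  moreover have "dim (set cols) \<noteq> 0"
    using \<open>p \<in> set cols\<close> \<open>p \<noteq> 0\<close> by (metis dim_eq_0 singletonD subsetD)
  moreover have "dim {(- u2, u1)} \<le> 1"
    by simp
  ultimately show "rank2 cols = 1"
    unfolding rank2_def by linarith
qed

lemma left_null_Mcols_iff:
  "left_null (u1, u2) (Mcols (Suc (Suc n)) v) \<longleftrightarrow>
    (\<forall>h\<le>n. u1 * (v h - v (h + 2)) + u2 * (2 * v (h + 1)) = 0)"
  unfolding left_null_def Mcols_def by (auto simp: less_Suc_eq_le)

lemma left_null_Mcols_3_iff:
  "left_null (u1, u2) (Mcols 3 v) \<longleftrightarrow>
    u1 * (v 0 - v 2) + u2 * (2 * v 1) = 0 \<and> u1 * (v 1 - v 3) + u2 * (2 * v 2) = 0"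
  by (simp add: left_null_def Mcols_def numeral_3_eq_3 numeral_2_eq_2 upt_rec)

lemma Mcols_nonzero:
  assumes "d \<ge> 3" and "\<exists>h\<le>d. v h \<noteq> 0"
  shows "\<exists>p\<in>set (Mcols d v). p \<noteq> 0"
proof (rule ccontr)
  assume "\<not> (\<exists>p\<in>set (Mcols d v). p \<noteq> 0)"
  then have zero: "v h = v (h + 2) \<and> v (h + 1) = 0" if "h + 2 \<le> d" for h
    using that unfolding Mcols_def by (auto simp: zero_prod_def)
  have "v h = 0" if "h \<le> d" for h
  proof -
    consider "h = 0" | "h = d" | "1 \<le> h" "h < d"
      using \<open>h \<le> d\<close> by linarith
    then show ?thesis
    proof cases
      case 1
      then show ?thesis
        using zero[of 0] zero[of 1] \<open>d \<ge> 3\<close> by simp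
    next
      case 2
      obtain k where "d = 3 + k"
        using \<open>d \<ge> 3\<close> le_Suc_ex by blast
      then show ?thesis
        using 2 zero[of k] zero[of "k + 1"] by (simp add: numeral_3_eq_3)
    next
      case 3
      then show ?thesis
        using zero[of "h - 1"] by simp
    qed
  qed
  then show False
    using assms(2) by blast
qed

lemma M3cols_nonzero:
  assumes "\<exists>h\<le>3. v h \<noteq> 0"
  shows "\<exists>p\<in>set (M3cols v). p \<noteq> 0"
proof (rule ccontr)
  assume "\<not> (\<exists>p\<in>set (M3cols v). p \<noteq> 0)"
  then have "7 * v 1 = 0" "-5 * v 0 + 2 * v 2 = 0" "- v 0 + 6 * v 2 = 0" "-2 * v 1 + 5 * v 3 = 0"
    unfolding M3cols_def by (auto simp: zero_prod_def)
  then have "v h = 0" if "h \<le> 3" for h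
    using that by (auto simp: le_Suc_eq numeral_3_eq_3 numeral_2_eq_2)
  then show False
    using assms by blast
qed

lemma rank2_Mcols_eq_1_iff:
  assumes "d \<ge> 3" and "\<exists>h\<le>d. v h \<noteq> 0"
  shows "rank2 (Mcols d v) = 1 \<longleftrightarrow> (\<exists>u. u \<noteq> 0 \<and> left_null u (Mcols d v))"
  using rank2_eq_1_iff Mcols_nonzero[OF assms] by blast

lemma rank2_M3cols_eq_1_iff:
  assumes "\<exists>h\<le>3. v h \<noteq> 0"
  shows "rank2 (M3cols v) = 1 \<longleftrightarrow> (\<exists>u. u \<noteq> 0 \<and> left_null u (M3cols v))"
  using rank2_eq_1_iff M3cols_nonzero[OF assms] by blast

lemma linear_2x2_solvable:
  fixes a b c e r s :: real
  assumes "\<forall>u1 u2. u1 * a + u2 * b = 0 \<and> u1 * c + u2 * e = 0 \<longrightarrow> u1 = 0 \<and> u2 = 0"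
  shows "\<exists>g g'. g * a + g' * b = r \<and> g * c + g' * e = s"
proof -
  define D where "D = a * e - b * c"
  have "D \<noteq> 0"
  proof
    assume det0: "D = 0"
    consider "(a, b) \<noteq> (0, 0)" | "(c, e) \<noteq> (0, 0)" | "a = 0" "b = 0" "c = 0" "e = 0"
      by auto
    then obtain u1 u2 where "(u1, u2) \<noteq> (0, 0)" "u1 * a + u2 * b = 0" "u1 * c + u2 * e = 0"
    proof cases
      case 1
      then show ?thesis
        using det0 unfolding D_def by (intro that[of b "- a"]) (auto simp: algebra_simps)
    next
      case 2
      then show ?thesis
        using det0 unfolding D_def by (intro that[of e "- c"]) (auto simp: algebra_simps)
    next
      case 3
      then show ?thesis
        by (intro that[of 1 0]) auto
    qed
    then show False
      using assms by blast
  qed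
  moreover have "(r * e - b * s) * a + (a * s - r * c) * b = r * D"
    "(r * e - b * s) * c + (a * s - r * c) * e = s * D"
    unfolding D_def by (simp_all add: algebra_simps)
  ultimately have "(r * e - b * s) / D * a + (a * s - r * c) / D * b = r"
    "(r * e - b * s) / D * c + (a * s - r * c) / D * e = s"
    by (simp_all add: field_simps)
  then show ?thesis
    by blast
qed

section \<open>Separating homogeneous components\<close>

lemma power_combination_eq_0:
  fixes A B G L :: real
  assumes "\<forall>t. t ^ (n + 2) * A + t ^ (n + 1) * B + t ^ n * G + t * L = 0" and "n \<ge> 1"
  shows "A = 0 \<and> B = 0 \<and> (if n = 1 then G + L = 0 else G = 0 \<and> L = 0)"
proof -
  define c where "c i = (if i = n + 2 then A else 0) + (if i = n + 1 then B else 0)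
     + (if i = n then G else 0) + (if i = 1 then L else 0)" for i
  have "(\<Sum>i\<le>n + 2. c i * t ^ i) = t ^ (n + 2) * A + t ^ (n + 1) * B + t ^ n * G + t * L"
    for t :: real
  proof -
    have "(\<Sum>i\<le>n + 2. c i * t ^ i) = (\<Sum>i\<le>n + 2. if i = n + 2 then A * t ^ (n + 2) else 0)
       + (\<Sum>i\<le>n + 2. if i = n + 1 then B * t ^ (n + 1) else 0)
       + (\<Sum>i\<le>n + 2. if i = n then G * t ^ n else 0) + (\<Sum>i\<le>n + 2. if i = 1 then L * t else 0)"
      unfolding sum.distrib[symmetric] by (rule sum.cong) (auto simp: c_def algebra_simps)
    then show ?thesis
      using \<open>n \<ge> 1\<close> by (simp add: sum.delta algebra_simps)
  qed
  then have "\<forall>t. (\<Sum>i\<le>n + 2. c i * t ^ i) = 0"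
    using assms(1) by simp
  then have "\<forall>i\<le>n + 2. c i = 0"
    using polyfun_eq_0 by blast
  then have "c (n + 2) = 0" "c (n + 1) = 0" "c n = 0" "c 1 = 0"
    using \<open>n \<ge> 1\<close> by auto
  then show ?thesis
    using \<open>n \<ge> 1\<close> unfolding c_def by (auto split: if_splits)
qed

lemma homogeneous_sum_eq_0_iff:
  fixes A B G L :: "real \<Rightarrow> real \<Rightarrow> real"
  assumes "n \<ge> 1"
    and "\<And>t x y. A (t * x) (t * y) = t ^ (n + 2) * A x y"
    and "\<And>t x y. B (t * x) (t * y) = t ^ (n + 1) * B x y"
    and "\<And>t x y. G (t * x) (t * y) = t ^ n * G x y"
    and "\<And>t x y. L (t * x) (t * y) = t * L x y"
  shows "(\<forall>x y. A x y + B x y + G x y + L x y = 0) \<longleftrightarrow>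
    (\<forall>x y. A x y = 0) \<and> (\<forall>x y. B x y = 0) \<and>
    (if n = 1 then \<forall>x y. G x y + L x y = 0 else (\<forall>x y. G x y = 0) \<and> (\<forall>x y. L x y = 0))"
proof
  assume zero: "\<forall>x y. A x y + B x y + G x y + L x y = 0"
  have "A x y = 0 \<and> B x y = 0 \<and> (if n = 1 then G x y + L x y = 0 else G x y = 0 \<and> L x y = 0)"
    for x y
  proof (rule power_combination_eq_0[OF _ \<open>n \<ge> 1\<close>], intro allI)
    fix t :: real
    show "t ^ (n + 2) * A x y + t ^ (n + 1) * B x y + t ^ n * G x y + t * L x y = 0"
      using zero[rule_format, of "t * x" "t * y"] assms(2-5) by simp
  qed
  then show "(\<forall>x y. A x y = 0) \<and> (\<forall>x y. B x y = 0) \<and>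
    (if n = 1 then \<forall>x y. G x y + L x y = 0 else (\<forall>x y. G x y = 0) \<and> (\<forall>x y. L x y = 0))"
    by (auto split: if_splits)
qed (auto split: if_splits)

section \<open>Binary forms\<close>

definition bform :: "nat \<Rightarrow> (nat \<Rightarrow> real) \<Rightarrow> real \<Rightarrow> real \<Rightarrow> real" where
  "bform n a x y = (\<Sum>h\<le>n. a h * x ^ h * y ^ (n - h))"

definition dx_coeffs :: "(nat \<Rightarrow> real) \<Rightarrow> nat \<Rightarrow> real" where
  "dx_coeffs a h = real (Suc h) * a (Suc h)"

definition dy_coeffs :: "nat \<Rightarrow> (nat \<Rightarrow> real) \<Rightarrow> nat \<Rightarrow> real" where
  "dy_coeffs n a h = real (n - h) * a h"

lemma bform_eq_0_iff: "(\<forall>x y. bform n a x y = 0) \<longleftrightarrow> (\<forall>h\<le>n. a h = 0)"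
proof
  assume "\<forall>x y. bform n a x y = 0"
  then have "\<forall>x. (\<Sum>h\<le>n. a h * x ^ h) = 0"
    by (metis (no_types, lifting) bform_def mult.right_neutral one_power2 power_one sum.cong)
  then show "\<forall>h\<le>n. a h = 0"
    using polyfun_eq_0 by blast
qed (simp add: bform_def)

lemma bform_scale: "bform n a (t * x) (t * y) = t ^ n * bform n a x y"
  unfolding bform_def sum_distrib_left
proof (rule sum.cong)
  fix h assume "h \<in> {..n}"
  then have "t ^ n = t ^ h * t ^ (n - h)"
    by (simp flip: power_add)
  then show "a h * (t * x) ^ h * (t * y) ^ (n - h) = t ^ n * (a h * x ^ h * y ^ (n - h))"
    by (simp add: power_mult_distrib)
qed simp

lemma has_real_derivative_bform_x:
  "((\<lambda>x. bform (Suc n) a x y) has_real_derivative bform n (dx_coeffs a) x y) (at x)"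
proof -
  have "((\<lambda>x. bform (Suc n) a x y) has_real_derivative
      (\<Sum>h\<le>Suc n. a h * (real h * x ^ (h - 1)) * y ^ (Suc n - h))) (at x)"
    unfolding bform_def
    by (intro DERIV_sum DERIV_cmult DERIV_cmult_right DERIV_pow derivative_eq_intros) auto
  also have "(\<Sum>h\<le>Suc n. a h * (real h * x ^ (h - 1)) * y ^ (Suc n - h)) = bform n (dx_coeffs a) x y"
    unfolding bform_def dx_coeffs_def by (subst sum.atMost_Suc_shift) (simp add: algebra_simps)
  finally show ?thesis .
qed

lemma has_real_derivative_bform_y:
  "((\<lambda>y. bform (Suc n) a x y) has_real_derivative bform n (dy_coeffs (Suc n) a) x y) (at y)"
proof -
  have "((\<lambda>y. bform (Suc n) a x y) has_real_derivative
      (\<Sum>h\<le>Suc n. a h * x ^ h * (real (Suc n - h) * y ^ (Suc n - h - 1)))) (at y)"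
    unfolding bform_def by (intro DERIV_sum DERIV_cmult DERIV_pow derivative_eq_intros) auto
  also have "(\<Sum>h\<le>Suc n. a h * x ^ h * (real (Suc n - h) * y ^ (Suc n - h - 1)))
      = bform n (dy_coeffs (Suc n) a) x y"
    unfolding bform_def dy_coeffs_def
    by (subst sum.atMost_Suc) (auto simp: algebra_simps Suc_diff_le intro!: sum.cong)
  finally show ?thesis .
qed

lemma dx_dy_coeffs_commute: "dx_coeffs (dy_coeffs (Suc n) a) = dy_coeffs n (dx_coeffs a)"
  by (simp add: fun_eq_iff dx_coeffs_def dy_coeffs_def)

lemma x_times_bform: "x * bform n a x y = bform (Suc n) (\<lambda>k. if k = 0 then 0 else a (k - 1)) x y"
  unfolding bform_def sum_distrib_left
  by (subst sum.atMost_Suc_shift) (simp add: algebra_simps)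

lemma y_times_bform: "y * bform n a x y = bform (Suc n) (\<lambda>k. if k = Suc n then 0 else a k) x y"
  unfolding bform_def sum_distrib_left
  by (subst sum.atMost_Suc) (auto simp: algebra_simps Suc_diff_le intro!: sum.cong)

lemma bform_diff: "bform n a x y - bform n b x y = bform n (\<lambda>h. a h - b h) x y"
  unfolding bform_def by (simp add: sum_subtractf algebra_simps)

lemma bform_euler:
  "x * bform n (dx_coeffs a) x y + y * bform n (dy_coeffs (Suc n) a) x y
    = real (Suc n) * bform (Suc n) a x y"
proof -
  have "x * bform n (dx_coeffs a) x y = (\<Sum>h\<le>Suc n. real h * a h * x ^ h * y ^ (Suc n - h))"
    unfolding bform_def sum_distrib_left dx_coeffs_def
    by (subst sum.atMost_Suc_shift) (simp add: algebra_simps)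
  moreover have "y * bform n (dy_coeffs (Suc n) a) x y
      = (\<Sum>h\<le>Suc n. real (Suc n - h) * a h * x ^ h * y ^ (Suc n - h))"
    unfolding bform_def sum_distrib_left dy_coeffs_def
    by (subst sum.atMost_Suc) (auto simp: algebra_simps Suc_diff_le intro!: sum.cong)
  moreover have "(\<Sum>h\<le>Suc n. real h * a h * x ^ h * y ^ (Suc n - h))
      + (\<Sum>h\<le>Suc n. real (Suc n - h) * a h * x ^ h * y ^ (Suc n - h))
      = real (Suc n) * bform (Suc n) a x y"
    unfolding bform_def sum_distrib_left sum.distrib[symmetric]
    by (intro sum.cong) (auto simp: algebra_simps of_nat_diff)
  ultimately show ?thesis
    by simp
qed

section \<open>Rotation-invariant binary forms\<close>

text \<open>The coefficients of x W_y - y W_x, where W = bform d a and a (d + 1) = 0.\<close>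
definition rot_coeffs :: "nat \<Rightarrow> (nat \<Rightarrow> real) \<Rightarrow> nat \<Rightarrow> real" where
  "rot_coeffs d a k = (if k = 0 then 0 else real (Suc d - k) * a (k - 1)) - real (Suc k) * a (Suc k)"

lemma bform_angular_derivative:
  assumes "a (Suc (Suc m)) = 0"
  shows "x * bform m (dy_coeffs (Suc m) a) x y - y * bform m (dx_coeffs a) x y
    = bform (Suc m) (rot_coeffs (Suc m) a) x y"
proof -
  have "(if k = 0 then 0 else dy_coeffs (Suc m) a (k - 1)) - (if k = Suc m then 0 else dx_coeffs a k)
      = rot_coeffs (Suc m) a k" for k
    using assms by (cases k) (auto simp: rot_coeffs_def dx_coeffs_def dy_coeffs_def)
  then show ?thesis
    unfolding x_times_bform y_times_bform bform_diff by presburger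
qed

lemma rot_coeffs_eq_0_iff:
  "(\<forall>k\<le>d. rot_coeffs d a k = 0) \<longleftrightarrow> a 1 = 0 \<and> (\<forall>j<d. real (d - j) * a j = real (j + 2) * a (j + 2))"
proof -
  have "(\<forall>k\<le>d. P k) \<longleftrightarrow> P 0 \<and> (\<forall>j<d. P (Suc j))" for P
    by (auto simp: Suc_le_eq) (metis Suc_le_eq not0_implies_Suc)
  then show ?thesis
    by (simp add: rot_coeffs_def)
qed

lemma Suc_times_choose_Suc: "Suc k * (n choose Suc k) = (n - k) * (n choose k)"
  by (metis binomial_absorption binomial_absorb_comp)

lemma radial_recurrence_odd:
  fixes a :: "nat \<Rightarrow> real"
  assumes "a 1 = 0"
    and rec: "\<forall>j<d. real (d - j) * a j = real (j + 2) * a (j + 2)"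
    and vanish: "\<forall>k>d. a k = 0"
  shows "a (2 * i + 1) = 0"
proof (induction i)
  case (Suc i)
  show ?case
  proof (cases "2 * i + 1 < d")
    case True
    then have "real (2 * i + 1 + 2) * a (2 * i + 1 + 2) = 0"
      using rec Suc.IH by fastforce
    then show ?thesis
      by (simp add: numeral_3_eq_3)
  qed (use vanish in simp)
qed (use assms(1) in \<open>simp add: One_nat_def\<close>)

lemma radial_recurrence_even_eq_0_iff:
  fixes a :: "nat \<Rightarrow> real"
  assumes rec: "\<forall>j<d. real (d - j) * a j = real (j + 2) * a (j + 2)"
  shows "2 * i \<le> d \<Longrightarrow> a (2 * i) = 0 \<longleftrightarrow> a 0 = 0"
proof (induction i)
  case (Suc i)
  then have "2 * i < d"
    by simp
  then have "real (d - 2 * i) * a (2 * i) = real (2 * i + 2) * a (2 * i + 2)"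
    using rec by blast
  moreover have "real (d - 2 * i) \<noteq> 0" "real (2 * i + 2) \<noteq> 0"
    using \<open>2 * i < d\<close> by simp_all
  ultimately have "a (2 * i + 2) = 0 \<longleftrightarrow> a (2 * i) = 0"
    by (metis mult_eq_0_iff)
  then show ?case
    using Suc by simp
qed simp

lemma radial_recurrence_even:
  fixes a :: "nat \<Rightarrow> real"
  assumes rec: "\<forall>j<d. real (d - j) * a j = real (j + 2) * a (j + 2)" and "d = 2 * m"
  shows "2 * i \<le> d \<Longrightarrow> a (2 * i) = real (m choose i) * a 0"
proof (induction i)
  case (Suc i)
  then have "2 * i < d" and IH: "a (2 * i) = real (m choose i) * a 0"
    by simp_all
  have "real (2 * i + 2) * a (2 * i + 2) = real (d - 2 * i) * a (2 * i)"
    using rec \<open>2 * i < d\<close> by (metis (no_types))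
  also have "\<dots> = 2 * (real (m - i) * real (m choose i)) * a 0"
    using IH \<open>d = 2 * m\<close> by (simp add: flip: diff_mult_distrib2)
  also have "\<dots> = 2 * real (Suc i * (m choose Suc i)) * a 0"
    by (simp only: Suc_times_choose_Suc of_nat_mult)
  also have "\<dots> = real (2 * i + 2) * (real (m choose Suc i) * a 0)"
    by (simp add: algebra_simps)
  finally have "a (2 * i + 2) = real (m choose Suc i) * a 0"
    by (subst (asm) mult_cancel_left) simp
  then show ?case
    by simp
qed simp

lemma radial_recurrence_solution:
  fixes a :: "nat \<Rightarrow> real"
  assumes a1: "a 1 = 0" and rec: "\<forall>j<d. real (d - j) * a j = real (j + 2) * a (j + 2)"
    and vanish: "\<forall>k>d. a k = 0" and nonzero: "\<exists>k. a k \<noteq> 0"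
  shows "even d \<and> a 0 \<noteq> 0 \<and> (\<forall>i. a (2 * i) = real ((d div 2) choose i) * a 0)
    \<and> (\<forall>i. a (2 * i + 1) = 0)"
proof -
  have odd_0: "a (2 * i + 1) = 0" for i
    using radial_recurrence_odd[OF a1 rec vanish] .
  have a0: "a 0 \<noteq> 0"
  proof
    assume "a 0 = 0"
    then have "a (2 * i) = 0" for i
      using radial_recurrence_even_eq_0_iff[OF rec] vanish by (cases "2 * i \<le> d") auto
    then have "a k = 0" for k
      using odd_0 by (cases "even k") (auto elim!: evenE oddE)
    then show False
      using nonzero by blast
  qed
  have "even d"
  proof (rule ccontr)
    assume "odd d"
    then obtain i where d: "d = 2 * i + 1"
      by (rule oddE)
    then have "2 * i < d"
      by simp
    then have "real (d - 2 * i) * a (2 * i) = real (2 * i + 2) * a (2 * i + 2)"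
      using rec by blast
    then have "a (2 * i) = 0"
      using vanish d by simp
    then show False
      using a0 radial_recurrence_even_eq_0_iff[OF rec] d by simp
  qed
  then obtain m where d: "d = 2 * m"
    by (rule evenE)
  have "a (2 * i) = real (m choose i) * a 0" for i
    using radial_recurrence_even[OF rec d] vanish d by (cases "i \<le> m") auto
  then show ?thesis
    using \<open>even d\<close> a0 odd_0 d by simp
qed

lemma binomial_radial_recurrence:
  fixes a :: "nat \<Rightarrow> real"
  assumes d: "d = 2 * m" and even: "\<forall>i. a (2 * i) = real (m choose i) * a 0"
    and odd: "\<forall>i. a (2 * i + 1) = 0"
  shows "a 1 = 0 \<and> (\<forall>j<d. real (d - j) * a j = real (j + 2) * a (j + 2))"
proof -
  have "real (d - j) * a j = real (j + 2) * a (j + 2)" if "j < d" for j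
  proof (cases "even j")
    case True
    then obtain i where j: "j = 2 * i"
      by (rule evenE)
    have "real (d - j) * a j = 2 * real ((m - i) * (m choose i)) * a 0"
      using even d j by (simp flip: diff_mult_distrib2)
    also have "\<dots> = real (j + 2) * a (j + 2)"
      using even[rule_format, of "Suc i"] j
      by (simp only: Suc_times_choose_Suc[symmetric]) (simp add: algebra_simps)
    finally show ?thesis .
  next
    case False
    then obtain i where "j = 2 * i + 1"
      by (rule oddE)
    then show ?thesis
      using odd[rule_format, of i] odd[rule_format, of "Suc i"] by simp
  qed
  then show ?thesis
    using odd[rule_format, of 0] by simp
qed

lemma radial_recurrence_iff:
  fixes a :: "nat \<Rightarrow> real"
  assumes "\<forall>k>d. a k = 0" and "\<exists>k. a k \<noteq> 0"
  shows "(a 1 = 0 \<and> (\<forall>j<d. real (d - j) * a j = real (j + 2) * a (j + 2)))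
    \<longleftrightarrow> even d \<and> a 0 \<noteq> 0 \<and> (\<forall>i. a (2 * i) = real ((d div 2) choose i) * a 0)
        \<and> (\<forall>i. a (2 * i + 1) = 0)"
proof
  assume "a 1 = 0 \<and> (\<forall>j<d. real (d - j) * a j = real (j + 2) * a (j + 2))"
  then show "even d \<and> a 0 \<noteq> 0 \<and> (\<forall>i. a (2 * i) = real ((d div 2) choose i) * a 0)
      \<and> (\<forall>i. a (2 * i + 1) = 0)"
    using radial_recurrence_solution assms by blast
next
  assume radial: "even d \<and> a 0 \<noteq> 0 \<and> (\<forall>i. a (2 * i) = real ((d div 2) choose i) * a 0)
      \<and> (\<forall>i. a (2 * i + 1) = 0)"
  then have "d = 2 * (d div 2)"
    by simp
  then show "a 1 = 0 \<and> (\<forall>j<d. real (d - j) * a j = real (j + 2) * a (j + 2))"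
    using binomial_radial_recurrence radial by blast
qed

section \<open>The potential and its derivatives\<close>

definition pot_coeffs :: "nat \<Rightarrow> (nat \<Rightarrow> real) \<Rightarrow> nat \<Rightarrow> real" where
  "pot_coeffs d v h = v h * real (d choose h)"

lemma hom_pot_eq_bform: "hom_pot d v x y = bform d (pot_coeffs d v) x y"
  unfolding hom_pot_def bform_def pot_coeffs_def by (simp add: atLeast0AtMost)

lemma hom_pot_nonzero_imp_coeff_nonzero:
  assumes "hom_pot d v q1 q2 \<noteq> 0"
  shows "\<exists>h\<le>d. v h \<noteq> 0"
  using assms unfolding hom_pot_def by (metis (no_types, lifting) atLeastAtMost_iff mult_eq_0_iff sum.neutral)

text \<open>Condition (II): the homogeneous potential is v 0 (q1^2 + q2^2)^(d/2).\<close>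
definition radial_coeffs :: "nat \<Rightarrow> (nat \<Rightarrow> real) \<Rightarrow> bool" where
  "radial_coeffs d v \<longleftrightarrow> v 0 \<noteq> 0 \<and>
     (\<forall>h\<in>{1..d div 2}. v (2*h) = real ((d div 2) choose h) / real (d choose (2*h)) * v 0) \<and>
     (\<forall>h'\<in>{1..d div 2}. v (2*h' - 1) = 0)"

lemma pot_coeffs_even_iff:
  assumes d: "d = 2 * m"
  shows "(\<forall>i. pot_coeffs d v (2 * i) = real (m choose i) * pot_coeffs d v 0) \<longleftrightarrow>
    (\<forall>h\<in>{1..m}. v (2 * h) = real (m choose h) / real (d choose (2 * h)) * v 0)"
proof -
  have eq: "pot_coeffs d v (2 * i) = real (m choose i) * pot_coeffs d v 0 \<longleftrightarrow>
      v (2 * i) = real (m choose i) / real (d choose (2 * i)) * v 0" if "i \<le> m" for i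
    using that d by (auto simp: pot_coeffs_def field_simps)
  have "pot_coeffs d v (2 * i) = real (m choose i) * pot_coeffs d v 0" if "\<forall>h\<in>{1..m}. v (2 * h)
      = real (m choose h) / real (d choose (2 * h)) * v 0" for i
  proof -
    consider "i = 0" | "1 \<le> i" "i \<le> m" | "m < i"
      by linarith
    then show ?thesis
      by cases (use that eq d in \<open>auto simp: pot_coeffs_def binomial_eq_0\<close>)
  qed
  then show ?thesis
    using eq by auto
qed

lemma pot_coeffs_odd_iff:
  assumes d: "d = 2 * m"
  shows "(\<forall>i. pot_coeffs d v (2 * i + 1) = 0) \<longleftrightarrow> (\<forall>h\<in>{1..m}. v (2 * h - 1) = 0)"
proof -
  have "pot_coeffs d v (2 * i + 1) = 0 \<longleftrightarrow> (i < m \<longrightarrow> v (2 * i + 1) = 0)" for i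
    using d by (auto simp: pot_coeffs_def)
  moreover have "(\<forall>h\<in>{1..m}. v (2 * h - 1) = 0) \<longleftrightarrow> (\<forall>i<m. v (2 * i + 1) = 0)"
    unfolding image_Suc_lessThan[symmetric] by auto
  ultimately show ?thesis
    by simp
qed

lemma rot_coeffs_pot_coeffs_eq_0_iff:
  assumes "\<exists>h\<le>d. v h \<noteq> 0"
  shows "(\<forall>k\<le>d. rot_coeffs d (pot_coeffs d v) k = 0) \<longleftrightarrow> even d \<and> radial_coeffs d v"
proof -
  let ?a = "pot_coeffs d v"
  have "\<forall>k>d. ?a k = 0" "\<exists>k. ?a k \<noteq> 0"
    using assms by (auto simp: pot_coeffs_def)
  then have "(\<forall>k\<le>d. rot_coeffs d ?a k = 0) \<longleftrightarrow> even d \<and> ?a 0 \<noteq> 0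
      \<and> (\<forall>i. ?a (2 * i) = real ((d div 2) choose i) * ?a 0) \<and> (\<forall>i. ?a (2 * i + 1) = 0)"
    unfolding rot_coeffs_eq_0_iff by (rule radial_recurrence_iff)
  also have "\<dots> \<longleftrightarrow> even d \<and> radial_coeffs d v"
  proof (cases "even d")
    case True
    then obtain m where d: "d = 2 * m"
      by (rule evenE)
    have half: "d div 2 = m"
      using d by simp
    show ?thesis
      unfolding radial_coeffs_def half pot_coeffs_even_iff[OF d] pot_coeffs_odd_iff[OF d]
      using True by (simp add: pot_coeffs_def)
  qed simp
  finally show ?thesis .
qed

lemma d1_full_pot:
  "d1 (full_pot (Suc m) v) = (\<lambda>x y. x + bform m (dx_coeffs (pot_coeffs (Suc m) v)) x y)"
proof (intro ext)
  fix x y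
  have "((\<lambda>x. full_pot (Suc m) v x y) has_real_derivative
      x + bform m (dx_coeffs (pot_coeffs (Suc m) v)) x y) (at x)"
    unfolding full_pot_def hom_pot_eq_bform
    by (auto intro!: derivative_eq_intros has_real_derivative_bform_x)
  then show "d1 (full_pot (Suc m) v) x y = x + bform m (dx_coeffs (pot_coeffs (Suc m) v)) x y"
    unfolding d1_def by (rule DERIV_imp_deriv)
qed

lemma d2_full_pot:
  "d2 (full_pot (Suc m) v) = (\<lambda>x y. y + bform m (dy_coeffs (Suc m) (pot_coeffs (Suc m) v)) x y)"
proof (intro ext)
  fix x y
  have "((\<lambda>y. full_pot (Suc m) v x y) has_real_derivative
      y + bform m (dy_coeffs (Suc m) (pot_coeffs (Suc m) v)) x y) (at y)"
    unfolding full_pot_def hom_pot_eq_bform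
    by (auto intro!: derivative_eq_intros has_real_derivative_bform_y)
  then show "d2 (full_pot (Suc m) v) x y = y + bform m (dy_coeffs (Suc m) (pot_coeffs (Suc m) v)) x y"
    unfolding d2_def by (rule DERIV_imp_deriv)
qed

lemma d1_x_plus_bform: "d1 (\<lambda>x y. x + bform (Suc n) a x y) x y = 1 + bform n (dx_coeffs a) x y"
  unfolding d1_def by (intro DERIV_imp_deriv derivative_eq_intros)
    (auto intro: has_real_derivative_bform_x)

lemma d2_x_plus_bform: "d2 (\<lambda>x y. x + bform (Suc n) a x y) x y = bform n (dy_coeffs (Suc n) a) x y"
  unfolding d2_def by (intro DERIV_imp_deriv derivative_eq_intros)
    (auto intro: has_real_derivative_bform_y)

lemma d2_y_plus_bform:
  "d2 (\<lambda>x y. y + bform (Suc n) a x y) x y = 1 + bform n (dy_coeffs (Suc n) a) x y"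
  unfolding d2_def by (intro DERIV_imp_deriv derivative_eq_intros)
    (auto intro: has_real_derivative_bform_y)

lemma pot_coeffs_dxx:
  "dx_coeffs (dx_coeffs (pot_coeffs (Suc (Suc n)) v)) h
    = real (Suc (Suc n) * Suc n * (n choose h)) * v (h + 2)"
proof -
  have "Suc h * (Suc (Suc h) * (Suc (Suc n) choose Suc (Suc h))) = Suc (Suc n) * Suc n * (n choose h)"
    by (metis Suc_times_binomial mult.assoc mult.left_commute)
  then show ?thesis
    unfolding dx_coeffs_def pot_coeffs_def by (metis (no_types) of_nat_mult mult.assoc mult.commute add_2_eq_Suc')
qed

lemma pot_coeffs_dyy:
  "dy_coeffs (Suc n) (dy_coeffs (Suc (Suc n)) (pot_coeffs (Suc (Suc n)) v)) h
    = real (Suc (Suc n) * Suc n * (n choose h)) * v h"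
proof -
  have "(Suc n - h) * ((Suc (Suc n) - h) * (Suc (Suc n) choose h)) = Suc (Suc n) * Suc n * (n choose h)"
    by (metis binomial_absorb_comp diff_Suc_1 mult.assoc mult.left_commute)
  then show ?thesis
    unfolding dy_coeffs_def pot_coeffs_def by (metis (no_types) of_nat_mult mult.assoc mult.commute)
qed

lemma pot_coeffs_dxy:
  "dy_coeffs (Suc n) (dx_coeffs (pot_coeffs (Suc (Suc n)) v)) h
    = real (Suc (Suc n) * Suc n * (n choose h)) * v (h + 1)"
proof -
  have "(Suc n - h) * (Suc h * (Suc (Suc n) choose Suc h)) = Suc (Suc n) * Suc n * (n choose h)"
    by (metis Suc_times_binomial binomial_absorb_comp diff_Suc_1 mult.assoc mult.left_commute)
  then show ?thesis
    unfolding dy_coeffs_def dx_coeffs_def pot_coeffs_def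
    by (metis (no_types) of_nat_mult mult.assoc mult.commute Suc_eq_plus1)
qed

section \<open>Splitting the Bertrand-Darboux condition by degree\<close>

definition bertrand_darboux_expr ::
  "nat \<Rightarrow> (nat \<Rightarrow> real) \<Rightarrow> real \<Rightarrow> real \<Rightarrow> real \<Rightarrow> real \<Rightarrow> real \<Rightarrow> real \<Rightarrow> real \<Rightarrow> real" where
  "bertrand_darboux_expr d v \<alpha> \<beta> \<beta>' \<gamma> \<gamma>' q1 q2 =
     (d2 (d2 (full_pot d v)) q1 q2 - d1 (d1 (full_pot d v)) q1 q2) * (-2*\<alpha>*q1*q2 - \<beta>'*q2 - \<beta>*q1 + \<gamma>)
     + 2 * d2 (d1 (full_pot d v)) q1 q2 * (\<alpha>*q2^2 - \<alpha>*q1^2 + \<beta>*q2 - \<beta>'*q1 + \<gamma>')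
     + d1 (full_pot d v) q1 q2 * (6*\<alpha>*q2 + 3*\<beta>) - d2 (full_pot d v) q1 q2 * (6*\<alpha>*q1 + 3*\<beta>')"

definition bertrand_darboux_solvable :: "nat \<Rightarrow> (nat \<Rightarrow> real) \<Rightarrow> bool" where
  "bertrand_darboux_solvable d v \<longleftrightarrow> (\<exists>\<alpha> \<beta> \<beta>' \<gamma> \<gamma>'. (\<alpha>, \<beta>, \<beta>', \<gamma>, \<gamma>') \<noteq> (0, 0, 0, 0, 0) \<and>
     (\<forall>x y. bertrand_darboux_expr d v \<alpha> \<beta> \<beta>' \<gamma> \<gamma>' x y = 0))"

definition bertrand_darboux_beta_part ::
  "nat \<Rightarrow> (nat \<Rightarrow> real) \<Rightarrow> real \<Rightarrow> real \<Rightarrow> real \<Rightarrow> real \<Rightarrow> real" where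
  "bertrand_darboux_beta_part n v \<beta> \<beta>' x y = (let c = pot_coeffs (Suc (Suc n)) v in
     (bform n (dy_coeffs (Suc n) (dy_coeffs (Suc (Suc n)) c)) x y - bform n (dx_coeffs (dx_coeffs c)) x y)
       * (- \<beta>' * y - \<beta> * x)
     + 2 * bform n (dy_coeffs (Suc n) (dx_coeffs c)) x y * (\<beta> * y - \<beta>' * x)
     + 3 * \<beta> * bform (Suc n) (dx_coeffs c) x y - 3 * \<beta>' * bform (Suc n) (dy_coeffs (Suc (Suc n)) c) x y)"

text \<open>The \<gamma>-part is \<gamma> (W_yy - W_xx) + 2 \<gamma>' W_xy with the coefficients of the second derivatives
  of the homogeneous potential W worked out.\<close>
definition bertrand_darboux_gamma_part ::
  "nat \<Rightarrow> (nat \<Rightarrow> real) \<Rightarrow> real \<Rightarrow> real \<Rightarrow> real \<Rightarrow> real \<Rightarrow> real" where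
  "bertrand_darboux_gamma_part n v \<gamma> \<gamma>' = bform n (\<lambda>h. real (Suc (Suc n) * Suc n * (n choose h))
     * (\<gamma> * (v h - v (h + 2)) + \<gamma>' * (2 * v (h + 1))))"

lemma bertrand_darboux_expr_expand:
  "bertrand_darboux_expr (Suc (Suc n)) v \<alpha> \<beta> \<beta>' \<gamma> \<gamma>' x y =
     - 2 * (real n + 4) * \<alpha> * bform (Suc (Suc n)) (rot_coeffs (Suc (Suc n)) (pot_coeffs (Suc (Suc n)) v)) x y
     + bertrand_darboux_beta_part n v \<beta> \<beta>' x y + bertrand_darboux_gamma_part n v \<gamma> \<gamma>' x y + 3 * \<beta> * x - 3 * \<beta>' * y"
proof -
  define c where "c = pot_coeffs (Suc (Suc n)) v"
  define W1 where "W1 = bform (Suc n) (dx_coeffs c) x y"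
  define W2 where "W2 = bform (Suc n) (dy_coeffs (Suc (Suc n)) c) x y"
  define W11 where "W11 = bform n (dx_coeffs (dx_coeffs c)) x y"
  define W12 where "W12 = bform n (dy_coeffs (Suc n) (dx_coeffs c)) x y"
  define W22 where "W22 = bform n (dy_coeffs (Suc n) (dy_coeffs (Suc (Suc n)) c)) x y"
  have lhs: "bertrand_darboux_expr (Suc (Suc n)) v \<alpha> \<beta> \<beta>' \<gamma> \<gamma>' x y =
     (W22 - W11) * (-2*\<alpha>*x*y - \<beta>'*y - \<beta>*x + \<gamma>) + 2 * W12 * (\<alpha>*y^2 - \<alpha>*x^2 + \<beta>*y - \<beta>'*x + \<gamma>')
     + (x + W1) * (6*\<alpha>*y + 3*\<beta>) - (y + W2) * (6*\<alpha>*x + 3*\<beta>')"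
    unfolding bertrand_darboux_expr_def d1_full_pot d2_full_pot d1_x_plus_bform d2_x_plus_bform d2_y_plus_bform
      W1_def W2_def W11_def W12_def W22_def c_def
    by simp
  have "x * W11 + y * W12 = real (Suc n) * W1"
    unfolding W11_def W12_def W1_def by (rule bform_euler)
  moreover have "x * W12 + y * W22 = real (Suc n) * W2"
    unfolding W12_def W22_def W2_def using bform_euler by (metis dx_dy_coeffs_commute)
  ultimately have "(W22 - W11) * (-2*\<alpha>*x*y) + 2 * W12 * (\<alpha>*y^2 - \<alpha>*x^2) + 6*\<alpha>*y*W1 - 6*\<alpha>*x*W2
      = - 2 * (real n + 4) * \<alpha> * (x * W2 - y * W1)"
    by (simp add: algebra_simps power2_eq_square) algebra
  also have "x * W2 - y * W1 = bform (Suc (Suc n)) (rot_coeffs (Suc (Suc n)) c) x y"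
    unfolding W1_def W2_def c_def pot_coeffs_def
    by (rule bform_angular_derivative) (simp add: binomial_eq_0 del: binomial_Suc_Suc)
  finally have alpha: "(W22 - W11) * (-2*\<alpha>*x*y) + 2 * W12 * (\<alpha>*y^2 - \<alpha>*x^2) + 6*\<alpha>*y*W1 - 6*\<alpha>*x*W2
      = - 2 * (real n + 4) * \<alpha> * bform (Suc (Suc n)) (rot_coeffs (Suc (Suc n)) c) x y" .
  have beta: "bertrand_darboux_beta_part n v \<beta> \<beta>' x y
      = (W22 - W11) * (- \<beta>' * y - \<beta> * x) + 2 * W12 * (\<beta> * y - \<beta>' * x) + 3 * \<beta> * W1 - 3 * \<beta>' * W2"
    unfolding bertrand_darboux_beta_part_def W1_def W2_def W11_def W12_def W22_def c_def Let_def ..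
  have gamma: "bertrand_darboux_gamma_part n v \<gamma> \<gamma>' x y = (W22 - W11) * \<gamma> + 2 * W12 * \<gamma>'"
    unfolding bertrand_darboux_gamma_part_def W11_def W12_def W22_def c_def bform_diff
    by (simp add: bform_def pot_coeffs_dxx pot_coeffs_dyy pot_coeffs_dxy sum_distrib_left
        sum_distrib_right algebra_simps flip: sum.distrib)
  show ?thesis
    unfolding lhs alpha[symmetric] beta gamma c_def[symmetric] by (simp add: algebra_simps)
qed

lemma bertrand_darboux_beta_part_scale:
  "bertrand_darboux_beta_part n v \<beta> \<beta>' (t * x) (t * y) = t ^ Suc n * bertrand_darboux_beta_part n v \<beta> \<beta>' x y"
  unfolding bertrand_darboux_beta_part_def Let_def bform_scale by (simp add: algebra_simps)

lemma bertrand_darboux_gamma_part_scale: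
  "bertrand_darboux_gamma_part n v \<gamma> \<gamma>' (t * x) (t * y) = t ^ n * bertrand_darboux_gamma_part n v \<gamma> \<gamma>' x y"
  unfolding bertrand_darboux_gamma_part_def by (rule bform_scale)

lemma bertrand_darboux_expr_eq_0_iff_parts:
  assumes "n \<ge> 1"
  shows "(\<forall>x y. bertrand_darboux_expr (Suc (Suc n)) v \<alpha> \<beta> \<beta>' \<gamma> \<gamma>' x y = 0) \<longleftrightarrow>
    (\<alpha> = 0 \<or> (\<forall>k\<le>Suc (Suc n). rot_coeffs (Suc (Suc n)) (pot_coeffs (Suc (Suc n)) v) k = 0))
    \<and> (\<forall>x y. bertrand_darboux_beta_part n v \<beta> \<beta>' x y = 0)
    \<and> (if n = 1 then \<forall>x y. bertrand_darboux_gamma_part n v \<gamma> \<gamma>' x y + 3 * \<beta> * x - 3 * \<beta>' * y = 0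
       else (\<forall>x y. bertrand_darboux_gamma_part n v \<gamma> \<gamma>' x y = 0) \<and> \<beta> = 0 \<and> \<beta>' = 0)"
proof -
  define R where "R = bform (Suc (Suc n)) (rot_coeffs (Suc (Suc n)) (pot_coeffs (Suc (Suc n)) v))"
  define A where "A x y = - 2 * (real n + 4) * \<alpha> * R x y" for x y
  define L where "L x y = 3 * \<beta> * x - 3 * \<beta>' * y" for x y
  have expand: "bertrand_darboux_expr (Suc (Suc n)) v \<alpha> \<beta> \<beta>' \<gamma> \<gamma>' x y
      = A x y + bertrand_darboux_beta_part n v \<beta> \<beta>' x y + bertrand_darboux_gamma_part n v \<gamma> \<gamma>' x y + L x y" for x y
    unfolding bertrand_darboux_expr_expand A_def R_def L_def by simp
  have "(\<forall>x y. bertrand_darboux_expr (Suc (Suc n)) v \<alpha> \<beta> \<beta>' \<gamma> \<gamma>' x y = 0) \<longleftrightarrow>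
    (\<forall>x y. A x y = 0) \<and> (\<forall>x y. bertrand_darboux_beta_part n v \<beta> \<beta>' x y = 0)
    \<and> (if n = 1 then \<forall>x y. bertrand_darboux_gamma_part n v \<gamma> \<gamma>' x y + L x y = 0
       else (\<forall>x y. bertrand_darboux_gamma_part n v \<gamma> \<gamma>' x y = 0) \<and> (\<forall>x y. L x y = 0))"
    unfolding expand
  proof (rule homogeneous_sum_eq_0_iff[OF assms])
    show "A (t * x) (t * y) = t ^ (n + 2) * A x y" "L (t * x) (t * y) = t * L x y" for t x y
      unfolding A_def R_def L_def bform_scale by (simp_all add: algebra_simps)
  qed (simp_all only: bertrand_darboux_beta_part_scale bertrand_darboux_gamma_part_scale Suc_eq_plus1)
  moreover have "(\<forall>x y. A x y = 0) \<longleftrightarrow>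
      \<alpha> = 0 \<or> (\<forall>k\<le>Suc (Suc n). rot_coeffs (Suc (Suc n)) (pot_coeffs (Suc (Suc n)) v) k = 0)"
    unfolding A_def R_def bform_eq_0_iff[symmetric] by (auto simp: add_nonneg_eq_0_iff)
  moreover have "(\<forall>x y. L x y = 0) \<longleftrightarrow> \<beta> = 0 \<and> \<beta>' = 0"
  proof
    assume "\<forall>x y. L x y = 0"
    from this[rule_format, of 1 0] this[rule_format, of 0 1] show "\<beta> = 0 \<and> \<beta>' = 0"
      by (simp add: L_def)
  qed (simp add: L_def)
  moreover have "(\<forall>x y. bertrand_darboux_gamma_part n v \<gamma> \<gamma>' x y + L x y = 0) \<longleftrightarrow>
      (\<forall>x y. bertrand_darboux_gamma_part n v \<gamma> \<gamma>' x y + 3 * \<beta> * x - 3 * \<beta>' * y = 0)"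
    unfolding L_def by (simp add: add_diff_eq)
  ultimately show ?thesis
    by argo
qed

lemma bertrand_darboux_gamma_part_eq_0_iff:
  "(\<forall>x y. bertrand_darboux_gamma_part n v \<gamma> \<gamma>' x y = 0) \<longleftrightarrow>
    left_null (\<gamma>, \<gamma>') (Mcols (Suc (Suc n)) v)"
proof -
  have "real (Suc (Suc n) * Suc n * (n choose h)) \<noteq> 0" if "h \<le> n" for h
    using that by (simp only: of_nat_eq_0_iff mult_eq_0_iff) simp
  then show ?thesis
    unfolding bertrand_darboux_gamma_part_def bform_eq_0_iff left_null_Mcols_iff by (auto simp only: mult_eq_0_iff)
qed

section \<open>Degree at least four\<close>

lemma bertrand_darboux_expr_eq_0_iff_deg_ge4:
  assumes "d \<ge> 4" and "\<exists>h\<le>d. v h \<noteq> 0"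
  shows "(\<forall>x y. bertrand_darboux_expr d v \<alpha> \<beta> \<beta>' \<gamma> \<gamma>' x y = 0) \<longleftrightarrow>
    (\<alpha> = 0 \<or> even d \<and> radial_coeffs d v) \<and> \<beta> = 0 \<and> \<beta>' = 0 \<and> left_null (\<gamma>, \<gamma>') (Mcols d v)"
proof -
  have d: "d = Suc (Suc (d - 2))" and "d - 2 \<ge> 2"
    using \<open>d \<ge> 4\<close> by simp_all
  have "bertrand_darboux_beta_part (d - 2) v 0 0 x y = 0" for x y
    by (simp add: bertrand_darboux_beta_part_def)
  then show ?thesis
    using assms \<open>d - 2 \<ge> 2\<close> bertrand_darboux_expr_eq_0_iff_parts[of "d - 2" v \<alpha> \<beta> \<beta>' \<gamma> \<gamma>']
    by (auto simp flip: d simp: rot_coeffs_pot_coeffs_eq_0_iff bertrand_darboux_gamma_part_eq_0_iff)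
qed

lemma bertrand_darboux_solvable_deg_ge4:
  assumes "d \<ge> 4" and "\<exists>h\<le>d. v h \<noteq> 0"
  shows "bertrand_darboux_solvable d v \<longleftrightarrow> even d \<and> radial_coeffs d v \<or> rank2 (Mcols d v) = 1"
proof -
  note expr_eq_0_iff = bertrand_darboux_expr_eq_0_iff_deg_ge4[OF assms]
  have rank: "rank2 (Mcols d v) = 1 \<longleftrightarrow> (\<exists>u. u \<noteq> 0 \<and> left_null u (Mcols d v))"
    using rank2_Mcols_eq_1_iff assms by simp
  show ?thesis
  proof
    assume "bertrand_darboux_solvable d v"
    then obtain \<alpha> \<beta> \<beta>' \<gamma> \<gamma>' where nz: "(\<alpha>, \<beta>, \<beta>', \<gamma>, \<gamma>') \<noteq> (0, 0, 0, 0, 0)"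
      and "\<forall>x y. bertrand_darboux_expr d v \<alpha> \<beta> \<beta>' \<gamma> \<gamma>' x y = 0"
      unfolding bertrand_darboux_solvable_def by blast
    then have "\<alpha> = 0 \<or> even d \<and> radial_coeffs d v" "\<beta> = 0" "\<beta>' = 0" "left_null (\<gamma>, \<gamma>') (Mcols d v)"
      unfolding expr_eq_0_iff by blast+
    then show "even d \<and> radial_coeffs d v \<or> rank2 (Mcols d v) = 1"
      unfolding rank using nz by (metis prod.inject zero_prod_def)
  next
    assume "even d \<and> radial_coeffs d v \<or> rank2 (Mcols d v) = 1"
    then consider "even d \<and> radial_coeffs d v" | u1 u2 where "(u1, u2) \<noteq> 0" "left_null (u1, u2) (Mcols d v)"
      unfolding rank by auto
    then show "bertrand_darboux_solvable d v"
    proof cases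
      case 1
      then have "\<forall>x y. bertrand_darboux_expr d v 1 0 0 0 0 x y = 0"
        unfolding expr_eq_0_iff by (simp add: left_null_def)
      then show ?thesis
        unfolding bertrand_darboux_solvable_def by (metis one_neq_zero prod.inject)
    next
      case (2 u1 u2)
      then have "\<forall>x y. bertrand_darboux_expr d v 0 0 0 u1 u2 x y = 0"
        unfolding expr_eq_0_iff by simp
      then show ?thesis
        unfolding bertrand_darboux_solvable_def using 2 by (metis prod.inject zero_prod_def)
    qed
  qed
qed

section \<open>Degree three\<close>

lemma bertrand_darboux_beta_part_deg3:
  "bertrand_darboux_beta_part 1 v \<beta> \<beta>' x y =
     3 * y^2 * (\<beta> * (7 * v 1) + \<beta>' * (-5 * v 0 + 2 * v 2))
     + 6 * x * y * (\<beta> * (- v 0 + 6 * v 2) + \<beta>' * (-6 * v 1 + v 3))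
     + 3 * x^2 * (\<beta> * (-2 * v 1 + 5 * v 3) + \<beta>' * (-7 * v 2))"
proof -
  have "real (3 choose 1) = 3" "real (3 choose 2) = 3"
    by (simp_all add: numeral_3_eq_3 numeral_2_eq_2)
  then show ?thesis
    unfolding bertrand_darboux_beta_part_def Let_def
    by (simp add: bform_def atMost_Suc dx_coeffs_def dy_coeffs_def pot_coeffs_def numeral_3_eq_3
        numeral_2_eq_2 algebra_simps power2_eq_square)
qed

lemma bertrand_darboux_beta_part_deg3_eq_0_iff:
  "(\<forall>x y. bertrand_darboux_beta_part 1 v \<beta> \<beta>' x y = 0) \<longleftrightarrow> left_null (\<beta>, \<beta>') (M3cols v)"
proof
  assume zero: "\<forall>x y. bertrand_darboux_beta_part 1 v \<beta> \<beta>' x y = 0"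
  have "\<beta> * (7 * v 1) + \<beta>' * (-5 * v 0 + 2 * v 2) = 0"
    using zero[rule_format, of 0 1] unfolding bertrand_darboux_beta_part_deg3 by simp
  moreover have "\<beta> * (-2 * v 1 + 5 * v 3) + \<beta>' * (-7 * v 2) = 0"
    using zero[rule_format, of 1 0] unfolding bertrand_darboux_beta_part_deg3 by simp
  moreover from calculation have "\<beta> * (- v 0 + 6 * v 2) + \<beta>' * (-6 * v 1 + v 3) = 0"
    using zero[rule_format, of 1 1] unfolding bertrand_darboux_beta_part_deg3 by simp
  ultimately show "left_null (\<beta>, \<beta>') (M3cols v)"
    unfolding left_null_def M3cols_def by simp
next
  assume "left_null (\<beta>, \<beta>') (M3cols v)"
  then have "\<beta> * (7 * v 1) + \<beta>' * (-5 * v 0 + 2 * v 2) = 0"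
    and "\<beta> * (- v 0 + 6 * v 2) + \<beta>' * (-6 * v 1 + v 3) = 0"
    and "\<beta> * (-2 * v 1 + 5 * v 3) + \<beta>' * (-7 * v 2) = 0"
    unfolding left_null_def M3cols_def by simp_all
  then show "\<forall>x y. bertrand_darboux_beta_part 1 v \<beta> \<beta>' x y = 0"
    unfolding bertrand_darboux_beta_part_deg3 by simp
qed

lemma bertrand_darboux_gamma_part_deg3_eq_0_iff:
  "(\<forall>x y. bertrand_darboux_gamma_part 1 v \<gamma> \<gamma>' x y + 3 * \<beta> * x - 3 * \<beta>' * y = 0) \<longleftrightarrow>
    2 * (\<gamma> * (v 0 - v 2) + \<gamma>' * (2 * v 1)) = \<beta>' \<and> 2 * (\<gamma> * (v 1 - v 3) + \<gamma>' * (2 * v 2)) = - \<beta>"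
proof -
  have G: "bertrand_darboux_gamma_part 1 v \<gamma> \<gamma>' x y + 3 * \<beta> * x - 3 * \<beta>' * y
      = 3 * y * (2 * (\<gamma> * (v 0 - v 2) + \<gamma>' * (2 * v 1)) - \<beta>')
        + 3 * x * (2 * (\<gamma> * (v 1 - v 3) + \<gamma>' * (2 * v 2)) + \<beta>)" for x y
    unfolding bertrand_darboux_gamma_part_def
    by (simp add: bform_def atMost_Suc numeral_2_eq_2 numeral_3_eq_3 algebra_simps)
  show ?thesis
  proof
    assume "\<forall>x y. bertrand_darboux_gamma_part 1 v \<gamma> \<gamma>' x y + 3 * \<beta> * x - 3 * \<beta>' * y = 0"
    from this[rule_format, of 0 1] this[rule_format, of 1 0] show
      "2 * (\<gamma> * (v 0 - v 2) + \<gamma>' * (2 * v 1)) = \<beta>' \<and> 2 * (\<gamma> * (v 1 - v 3) + \<gamma>' * (2 * v 2)) = - \<beta>"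
      unfolding G by simp
  qed (unfold G, simp)
qed

lemma bertrand_darboux_expr_eq_0_iff_deg3:
  assumes "\<exists>h\<le>3. v h \<noteq> 0"
  shows "(\<forall>x y. bertrand_darboux_expr 3 v \<alpha> \<beta> \<beta>' \<gamma> \<gamma>' x y = 0) \<longleftrightarrow>
    \<alpha> = 0 \<and> left_null (\<beta>, \<beta>') (M3cols v) \<and>
    2 * (\<gamma> * (v 0 - v 2) + \<gamma>' * (2 * v 1)) = \<beta>' \<and> 2 * (\<gamma> * (v 1 - v 3) + \<gamma>' * (2 * v 2)) = - \<beta>"
proof -
  have parts: "(\<forall>x y. bertrand_darboux_expr 3 v \<alpha> \<beta> \<beta>' \<gamma> \<gamma>' x y = 0) \<longleftrightarrow>
      (\<alpha> = 0 \<or> (\<forall>k\<le>3. rot_coeffs 3 (pot_coeffs 3 v) k = 0))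
      \<and> (\<forall>x y. bertrand_darboux_beta_part 1 v \<beta> \<beta>' x y = 0)
      \<and> (\<forall>x y. bertrand_darboux_gamma_part 1 v \<gamma> \<gamma>' x y + 3 * \<beta> * x - 3 * \<beta>' * y = 0)"
    using bertrand_darboux_expr_eq_0_iff_parts[of 1 v \<alpha> \<beta> \<beta>' \<gamma> \<gamma>']
    by (simp add: numeral_3_eq_3)
  have "\<not> (\<forall>k\<le>3. rot_coeffs 3 (pot_coeffs 3 v) k = 0)"
    using rot_coeffs_pot_coeffs_eq_0_iff[OF assms] by simp
  then show ?thesis
    unfolding parts bertrand_darboux_beta_part_deg3_eq_0_iff bertrand_darboux_gamma_part_deg3_eq_0_iff
    by blast
qed

lemma bertrand_darboux_solvable_deg3_imp_rank:
  assumes nonzero: "\<exists>h\<le>3. v h \<noteq> 0" and "bertrand_darboux_solvable 3 v"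
  shows "rank2 (Mcols 3 v) = 1 \<or> rank2 (M3cols v) = 1"
proof -
  obtain \<alpha> \<beta> \<beta>' \<gamma> \<gamma>' where nz: "(\<alpha>, \<beta>, \<beta>', \<gamma>, \<gamma>') \<noteq> (0, 0, 0, 0, 0)"
    and "\<forall>x y. bertrand_darboux_expr 3 v \<alpha> \<beta> \<beta>' \<gamma> \<gamma>' x y = 0"
    using assms(2) unfolding bertrand_darboux_solvable_def by blast
  then have "\<alpha> = 0" and null3: "left_null (\<beta>, \<beta>') (M3cols v)"
    and "2 * (\<gamma> * (v 0 - v 2) + \<gamma>' * (2 * v 1)) = \<beta>'" "2 * (\<gamma> * (v 1 - v 3) + \<gamma>' * (2 * v 2)) = - \<beta>"
    unfolding bertrand_darboux_expr_eq_0_iff_deg3[OF nonzero] by blast+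
  show ?thesis
  proof (cases "(\<beta>, \<beta>') = (0, 0)")
    case True
    then have "(\<gamma>, \<gamma>') \<noteq> 0" and "left_null (\<gamma>, \<gamma>') (Mcols 3 v)"
      using nz \<open>\<alpha> = 0\<close> \<open>2 * (\<gamma> * (v 0 - v 2) + \<gamma>' * (2 * v 1)) = \<beta>'\<close>
        \<open>2 * (\<gamma> * (v 1 - v 3) + \<gamma>' * (2 * v 2)) = - \<beta>\<close>
      by (auto simp: zero_prod_def left_null_Mcols_3_iff)
    then show ?thesis
      using rank2_Mcols_eq_1_iff[of 3 v] nonzero by auto
  next
    case False
    then show ?thesis
      using rank2_M3cols_eq_1_iff[OF nonzero] null3 by (auto simp: zero_prod_def)
  qed
qed

lemma bertrand_darboux_solvable_deg3_if_rank:
  assumes nonzero: "\<exists>h\<le>3. v h \<noteq> 0" and rank: "rank2 (Mcols 3 v) = 1 \<or> rank2 (M3cols v) = 1"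
  shows "bertrand_darboux_solvable 3 v"
proof (cases "\<exists>u. u \<noteq> 0 \<and> left_null u (Mcols 3 v)")
  case True
  then obtain u1 u2 where "(u1, u2) \<noteq> 0" "left_null (u1, u2) (Mcols 3 v)"
    by auto
  moreover from this have "\<forall>x y. bertrand_darboux_expr 3 v 0 0 0 u1 u2 x y = 0"
    unfolding bertrand_darboux_expr_eq_0_iff_deg3[OF nonzero] left_null_Mcols_3_iff
    by (simp add: left_null_def)
  ultimately show ?thesis
    unfolding bertrand_darboux_solvable_def by (metis prod.inject zero_prod_def)
next
  case False
  then obtain b b' where "(b, b') \<noteq> 0" and null3: "left_null (b, b') (M3cols v)"
    using rank rank2_Mcols_eq_1_iff[of 3 v] rank2_M3cols_eq_1_iff[OF nonzero] nonzero by auto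
  from False have "\<forall>u1 u2. u1 * (v 0 - v 2) + u2 * (2 * v 1) = 0 \<and> u1 * (v 1 - v 3) + u2 * (2 * v 2) = 0
      \<longrightarrow> u1 = 0 \<and> u2 = 0"
    by (auto simp: zero_prod_def left_null_Mcols_3_iff)
  then obtain g g' where "g * (v 0 - v 2) + g' * (2 * v 1) = b' / 2"
    "g * (v 1 - v 3) + g' * (2 * v 2) = - b / 2"
    using linear_2x2_solvable by blast
  then have "\<forall>x y. bertrand_darboux_expr 3 v 0 b b' g g' x y = 0"
    unfolding bertrand_darboux_expr_eq_0_iff_deg3[OF nonzero] using null3 by simp
  then show ?thesis
    unfolding bertrand_darboux_solvable_def using \<open>(b, b') \<noteq> 0\<close> by (metis prod.inject zero_prod_def)
qed

lemma bertrand_darboux_solvable_deg3: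
  assumes "\<exists>h\<le>3. v h \<noteq> 0"
  shows "bertrand_darboux_solvable 3 v \<longleftrightarrow> rank2 (Mcols 3 v) = 1 \<or> rank2 (M3cols v) = 1"
  using bertrand_darboux_solvable_deg3_imp_rank bertrand_darboux_solvable_deg3_if_rank assms by blast

theorem mainTheorem2:
  fixes d :: nat and v :: "nat \<Rightarrow> real"
  assumes "d \<ge> 3"
    and "\<exists>q1 q2. hom_pot d v q1 q2 \<noteq> 0"
  defines "V \<equiv> full_pot d v"
  shows "(\<exists>\<alpha> \<beta> \<beta>' \<gamma> \<gamma>' :: real. (\<alpha>, \<beta>, \<beta>', \<gamma>, \<gamma>') \<noteq> (0, 0, 0, 0, 0) \<and>
     (\<forall>q1 q2.
        (d2 (d2 V) q1 q2 - d1 (d1 V) q1 q2) * (-2*\<alpha>*q1*q2 - \<beta>'*q2 - \<beta>*q1 + \<gamma>)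
        + 2 * d2 (d1 V) q1 q2 * (\<alpha>*q2^2 - \<alpha>*q1^2 + \<beta>*q2 - \<beta>'*q1 + \<gamma>')
        + d1 V q1 q2 * (6*\<alpha>*q2 + 3*\<beta>) - d2 V q1 q2 * (6*\<alpha>*q1 + 3*\<beta>') = 0))
   \<longleftrightarrow>
   ((odd d \<and> d \<ge> 5 \<longrightarrow> rank2 (Mcols d v) = 1) \<and>
    (even d \<and> d \<ge> 4 \<longrightarrow>
       rank2 (Mcols d v) = 1 \<or>
       (v 0 \<noteq> 0 \<and>
        (\<forall>h\<in>{1..d div 2}. v (2*h) = real ((d div 2) choose h) / real (d choose (2*h)) * v 0) \<and>
        (\<forall>h'\<in>{1..d div 2}. v (2*h' - 1) = 0))) \<and>
    (d = 3 \<longrightarrow> rank2 (Mcols 3 v) = 1 \<or> rank2 (M3cols v) = 1))"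
proof -
  have nonzero: "\<exists>h\<le>d. v h \<noteq> 0"
    using assms(2) hom_pot_nonzero_imp_coeff_nonzero by blast
  have "bertrand_darboux_solvable d v \<longleftrightarrow>
      (odd d \<and> d \<ge> 5 \<longrightarrow> rank2 (Mcols d v) = 1) \<and>
      (even d \<and> d \<ge> 4 \<longrightarrow> rank2 (Mcols d v) = 1 \<or> radial_coeffs d v) \<and>
      (d = 3 \<longrightarrow> rank2 (Mcols 3 v) = 1 \<or> rank2 (M3cols v) = 1)"
  proof (cases "d = 3")
    case True
    then show ?thesis
      using bertrand_darboux_solvable_deg3 nonzero by simp
  next
    case False
    then have "d \<ge> 4" "odd d \<Longrightarrow> d \<ge> 5"
      using \<open>d \<ge> 3\<close> by presburger+
    then show ?thesis
      using bertrand_darboux_solvable_deg_ge4 nonzero by auto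
  qed
  then show ?thesis
    unfolding V_def bertrand_darboux_solvable_def bertrand_darboux_expr_def radial_coeffs_def .
qed

end
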